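(* Let $X$ be a locally compact locale with frame presentation $\mathcal{O}X=\langle G\mid R\rangle$, let $\mathrm{ev}\colon\Sigma^X\times X\to\Sigma$ be the evaluation map of the exponential $\Sigma^X$, let $\widetilde{\mathrm{ev}}=\mathrm{ev}_{\Sigma^G}\circ(\Sigma^{\Sigma^G}\times i_X)\colon\Sigma^{\Sigma^G}\times X\to\Sigma$, and let $q\colon\Sigma^{\Sigma^G}\to\Sigma^X$ be the unique locale map with $\mathrm{ev}\circ(q\times X)=\widetilde{\mathrm{ev}}$ (equivalently $q=\Sigma^{i_X}$). Then there is a locale map $s\colon\Sigma^X\to\Sigma^{\Sigma^G}$ with $q\circ s=\mathrm{id}_{\Sigma^X}$ and $\widetilde{\mathrm{ev}}\circ(s\times X)=\mathrm{ev}$.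
   Context: A frame is a complete lattice in which finite meets distribute over arbitrary joins; a locale $X$ is formally a frame $\mathcal{O}X$, and a locale map $f\colon X\to Y$ is a frame homomorphism $f^*\colon\mathcal{O}Y\to\mathcal{O}X$. $\Sigma$ is the Sierpiński locale (frame = free frame on one generator). For a set $G$, $\Sigma^G$ is the locale whose frame is the free frame on $G$; it is locally compact, so $\Sigma^{\Sigma^G}$ exists, with evaluation map $\mathrm{ev}_{\Sigma^G}\colon\Sigma^{\Sigma^G}\times\Sigma^G\to\Sigma$. A presentation $\mathcal{O}X=\langle G\mid R\rangle$ means $\mathcal{O}X$ is the quotient of the free frame on $G$ by the congruence generated by the relations $R$; the quotient map is $i_X^*$ for a sublocale inclusion $i_X\colon X\hookrightarrow\Sigma^G$. Since $X$ is locally compact, the exponential $\Sigma^X$ exists. *)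

theory Defs
  imports Main
begin

text \<open>Frames are represented concretely as families of sets ordered by inclusion
(every frame is isomorphic to such a family, e.g. via principal down-sets):
binary meets are intersections, the top is the union of the family, and joins
are least upper bounds with respect to inclusion.  A locale map f : X \<rightarrow> Y is
represented by its frame homomorphism f* : OY \<rightarrow> OX.\<close>

definition frame_join :: "'a set set \<Rightarrow> 'a set set \<Rightarrow> 'a set" where
  "frame_join A S = \<Inter>{c \<in> A. \<Union>S \<subseteq> c}"

definition is_frame :: "'a set set \<Rightarrow> bool" where
  "is_frame A \<longleftrightarrow> \<Union>A \<in> A
     \<and> (\<forall>a\<in>A. \<forall>b\<in>A. a \<inter> b \<in> A)
     \<and> (\<forall>S\<subseteq>A. frame_join A S \<in> A)
     \<and> (\<forall>a\<in>A. \<forall>S\<subseteq>A. a \<inter> frame_join A S = frame_join A ((\<inter>) a ` S))"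

definition frame_hom :: "'a set set \<Rightarrow> 'b set set \<Rightarrow> ('a set \<Rightarrow> 'b set) \<Rightarrow> bool" where
  "frame_hom A B h \<longleftrightarrow> (\<forall>a\<in>A. h a \<in> B)
     \<and> h (\<Union>A) = \<Union>B
     \<and> (\<forall>a\<in>A. \<forall>b\<in>A. h (a \<inter> b) = h a \<inter> h b)
     \<and> (\<forall>S\<subseteq>A. h (frame_join A S) = frame_join B (h ` S))"

definition frame_congruence :: "'a set set \<Rightarrow> ('a set \<times> 'a set) set \<Rightarrow> bool" where
  "frame_congruence A \<theta> \<longleftrightarrow> \<theta> \<subseteq> A \<times> A
     \<and> (\<forall>a\<in>A. (a, a) \<in> \<theta>)
     \<and> (\<forall>a b. (a, b) \<in> \<theta> \<longrightarrow> (b, a) \<in> \<theta>)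
     \<and> (\<forall>a b c. (a, b) \<in> \<theta> \<longrightarrow> (b, c) \<in> \<theta> \<longrightarrow> (a, c) \<in> \<theta>)
     \<and> (\<forall>a b c d. (a, b) \<in> \<theta> \<longrightarrow> (c, d) \<in> \<theta> \<longrightarrow> (a \<inter> c, b \<inter> d) \<in> \<theta>)
     \<and> (\<forall>P\<subseteq>\<theta>. (frame_join A (fst ` P), frame_join A (snd ` P)) \<in> \<theta>)"

text \<open>Free frame on a set G: upward closed families of finite subsets of G
(down-sets of the free meet-semilattice on G).  The Sierpinski locale has the free frame on one generator.\<close>

definition fin_subsets :: "'g set \<Rightarrow> 'g set set" where
  "fin_subsets G = {K. finite K \<and> K \<subseteq> G}"

definition free_frame :: "'g set \<Rightarrow> 'g set set set" where
  "free_frame G = {U. U \<subseteq> fin_subsets G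
      \<and> (\<forall>K\<in>U. \<forall>K'\<in>fin_subsets G. K \<subseteq> K' \<longrightarrow> K' \<in> U)}"

definition free_gen :: "'g set \<Rightarrow> 'g \<Rightarrow> 'g set set" where
  "free_gen G g = {K \<in> fin_subsets G. g \<in> K}"

abbreviation Sierpinski_frame :: "unit set set set" where
  "Sierpinski_frame \<equiv> free_frame (UNIV :: unit set)"

definition free_ext :: "'b set set \<Rightarrow> ('g \<Rightarrow> 'b set) \<Rightarrow> 'g set set \<Rightarrow> 'b set" where
  "free_ext B \<phi> U = frame_join B {\<Inter>(\<phi> ` K) \<inter> \<Union>B | K. K \<in> U}"

text \<open>Presentations: OX = < G | R > via the surjective quotient map iX (= i_X*),
whose kernel is the frame congruence generated by R.\<close>

definition presents ::
  "'g set \<Rightarrow> ('g set set \<times> 'g set set) set \<Rightarrow> 'x set set \<Rightarrow> ('g set set \<Rightarrow> 'x set) \<Rightarrow> bool" where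
  "presents G R OX iX \<longleftrightarrow> is_frame OX
     \<and> R \<subseteq> free_frame G \<times> free_frame G
     \<and> frame_hom (free_frame G) OX iX
     \<and> iX ` free_frame G = OX
     \<and> {(a, b). a \<in> free_frame G \<and> b \<in> free_frame G \<and> iX a = iX b}
         = \<Inter>{\<theta>. frame_congruence (free_frame G) \<theta> \<and> R \<subseteq> \<theta>}"

definition way_below :: "'a set set \<Rightarrow> 'a set \<Rightarrow> 'a set \<Rightarrow> bool" where
  "way_below A a b \<longleftrightarrow> (\<forall>S\<subseteq>A. b \<subseteq> frame_join A S \<longrightarrow>
      (\<exists>S'\<subseteq>S. finite S' \<and> a \<subseteq> frame_join A S'))"

definition locally_compact :: "'a set set \<Rightarrow> bool" where
  "locally_compact A \<longleftrightarrow> (\<forall>b\<in>A. b = frame_join A {a \<in> A. way_below A a b})"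

definition directed_in :: "'a set set \<Rightarrow> 'a set set \<Rightarrow> bool" where
  "directed_in A D \<longleftrightarrow> D \<subseteq> A \<and> D \<noteq> {} \<and> (\<forall>x\<in>D. \<forall>y\<in>D. \<exists>z\<in>D. x \<subseteq> z \<and> y \<subseteq> z)"

definition scott_open :: "'a set set \<Rightarrow> 'a set set \<Rightarrow> bool" where
  "scott_open A U \<longleftrightarrow> U \<subseteq> A
     \<and> (\<forall>a\<in>U. \<forall>b\<in>A. a \<subseteq> b \<longrightarrow> b \<in> U)
     \<and> (\<forall>D. directed_in A D \<longrightarrow> frame_join A D \<in> U \<longrightarrow> D \<inter> U \<noteq> {})"

definition scott_frame :: "'a set set \<Rightarrow> 'a set set set" where
  "scott_frame A = {U. scott_open A U}"

text \<open>Binary products of locales: the frame of Y \<times> X is the tensor product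
OY \<otimes> OX, realised as the frame of C-ideals.\<close>

definition C_ideal :: "'a set set \<Rightarrow> 'b set set \<Rightarrow> ('a set \<times> 'b set) set \<Rightarrow> bool" where
  "C_ideal A B D \<longleftrightarrow> D \<subseteq> A \<times> B
     \<and> (\<forall>a b a' b'. (a, b) \<in> D \<longrightarrow> a' \<in> A \<longrightarrow> b' \<in> B \<longrightarrow> a' \<subseteq> a \<longrightarrow> b' \<subseteq> b \<longrightarrow> (a', b') \<in> D)
     \<and> (\<forall>S\<subseteq>A. \<forall>b\<in>B. (\<forall>a\<in>S. (a, b) \<in> D) \<longrightarrow> (frame_join A S, b) \<in> D)
     \<and> (\<forall>S\<subseteq>B. \<forall>a\<in>A. (\<forall>b\<in>S. (a, b) \<in> D) \<longrightarrow> (a, frame_join B S) \<in> D)"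

definition tensor :: "'a set set \<Rightarrow> 'b set set \<Rightarrow> ('a set \<times> 'b set) set set" where
  "tensor A B = {D. C_ideal A B D}"

definition tens :: "'a set set \<Rightarrow> 'b set set \<Rightarrow> 'a set \<Rightarrow> 'b set \<Rightarrow> ('a set \<times> 'b set) set" where
  "tens A B u v = \<Inter>{D \<in> tensor A B. (u, v) \<in> D}"

text \<open>Product of locale maps f \<times> g : Y \<times> X \<rightarrow> Y' \<times> X', given the frame homs
f : OY' \<rightarrow> OY and g : OX' \<rightarrow> OX; the result is the frame hom
OY' \<otimes> OX' \<rightarrow> OY \<otimes> OX sending u \<otimes> v to f u \<otimes> g v.\<close>

definition prod_hom ::
  "'a set set \<Rightarrow> 'b set set \<Rightarrow> ('c set \<Rightarrow> 'a set) \<Rightarrow> ('d set \<Rightarrow> 'b set)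
     \<Rightarrow> ('c set \<times> 'd set) set \<Rightarrow> ('a set \<times> 'b set) set" where
  "prod_hom A B f g D = frame_join (tensor A B) {tens A B (f u) (g v) | u v. (u, v) \<in> D}"

text \<open>Exponential \<Sigma>^X of a locally compact locale X: its frame is the Scott
topology of OX, and the evaluation map ev : \<Sigma>^X \<times> X \<rightarrow> \<Sigma> sends the generator of
O\<Sigma> to the join over a \<in> OX of {u. a \<ll> u} \<otimes> a.\<close>

definition ev_elem :: "'a set set \<Rightarrow> ('a set set \<times> 'a set) set" where
  "ev_elem A = frame_join (tensor (scott_frame A) A)
      {tens (scott_frame A) A {u \<in> A. way_below A a u} a | a. a \<in> A}"

definition ev_hom :: "'a set set \<Rightarrow> unit set set \<Rightarrow> ('a set set \<times> 'a set) set" where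
  "ev_hom A = free_ext (tensor (scott_frame A) A) (\<lambda>_. ev_elem A)"

end

theory Submission
  imports Defs
begin

text \<open>On the basic pairs (way_above a, a) of the evaluation map, the hypothesis on q compares the
two transported evaluation maps; bounding both by explicit C-ideals of the tensor product shows
q U = {b. iX b \<in> U}, i.e. q is \<Sigma>^iX.  As OX is locally compact and iX is onto,
\<sigma> a = \<Union>{b. iX b \<ll> a} is a Scott-continuous right inverse of iX, so s V = {a. \<sigma> a \<in> V} is a frame
homomorphism of the Scott topologies with s \<circ> q = id.  Then (s \<times> X) \<circ> (q \<times> X) = id turns
the hypothesis into the evaluation identity.\<close>

lemma frame_join_upper: "\<Union>S \<subseteq> frame_join A S"
  unfolding frame_join_def by blast

lemma frame_join_least: "c \<in> A \<Longrightarrow> \<Union>S \<subseteq> c \<Longrightarrow> frame_join A S \<subseteq> c"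
  unfolding frame_join_def by blast

lemma frame_join_eq_Union: "\<Union>S \<in> A \<Longrightarrow> frame_join A S = \<Union>S"
  by (meson frame_join_least frame_join_upper subset_antisym subset_refl)

lemma frame_join_closed: "is_frame A \<Longrightarrow> S \<subseteq> A \<Longrightarrow> frame_join A S \<in> A"
  unfolding is_frame_def by blast

lemma frame_Int_closed: "is_frame A \<Longrightarrow> a \<in> A \<Longrightarrow> b \<in> A \<Longrightarrow> a \<inter> b \<in> A"
  by (simp add: is_frame_def)

lemma frame_top_closed: "is_frame A \<Longrightarrow> \<Union>A \<in> A"
  by (simp add: is_frame_def)

lemma frame_join_mono:
  "is_frame A \<Longrightarrow> S \<subseteq> T \<Longrightarrow> T \<subseteq> A \<Longrightarrow> frame_join A S \<subseteq> frame_join A T"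
  by (meson Sup_subset_mono frame_join_closed frame_join_least frame_join_upper order_trans)

lemma frame_join_singleton: "a \<in> A \<Longrightarrow> frame_join A {a} = a"
  by (simp add: frame_join_eq_Union)

lemma frame_homI:
  assumes "\<And>a. a \<in> A \<Longrightarrow> h a \<in> B" "h (\<Union>A) = \<Union>B"
    "\<And>a b. a \<in> A \<Longrightarrow> b \<in> A \<Longrightarrow> h (a \<inter> b) = h a \<inter> h b"
    "\<And>S. S \<subseteq> A \<Longrightarrow> h (frame_join A S) = frame_join B (h ` S)"
  shows "frame_hom A B h"
  unfolding frame_hom_def using assms by (intro conjI ballI allI impI) auto

lemma frame_hom_closed: "frame_hom A B h \<Longrightarrow> a \<in> A \<Longrightarrow> h a \<in> B"
  unfolding frame_hom_def by (elim conjE) simp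

lemma frame_hom_top: "frame_hom A B h \<Longrightarrow> h (\<Union>A) = \<Union>B"
  unfolding frame_hom_def by (elim conjE) simp

lemma frame_hom_Int: "frame_hom A B h \<Longrightarrow> a \<in> A \<Longrightarrow> b \<in> A \<Longrightarrow> h (a \<inter> b) = h a \<inter> h b"
  unfolding frame_hom_def by (elim conjE) simp

lemma frame_hom_join: "frame_hom A B h \<Longrightarrow> S \<subseteq> A \<Longrightarrow> h (frame_join A S) = frame_join B (h ` S)"
  unfolding frame_hom_def by (elim conjE) simp

lemma frame_hom_mono: "frame_hom A B h \<Longrightarrow> a \<in> A \<Longrightarrow> b \<in> A \<Longrightarrow> a \<subseteq> b \<Longrightarrow> h a \<subseteq> h b"
  by (metis frame_hom_Int le_iff_inf)

lemma frame_hom_id: "frame_hom A A id"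
  by (rule frame_homI) auto

lemma way_belowD:
  "way_below A a u \<Longrightarrow> S \<subseteq> A \<Longrightarrow> u \<subseteq> frame_join A S \<Longrightarrow> \<exists>S'\<subseteq>S. finite S' \<and> a \<subseteq> frame_join A S'"
  unfolding way_below_def by blast

lemma way_belowI:
  "(\<And>S. S \<subseteq> A \<Longrightarrow> u \<subseteq> frame_join A S \<Longrightarrow> \<exists>S'\<subseteq>S. finite S' \<and> a \<subseteq> frame_join A S') \<Longrightarrow> way_below A a u"
  unfolding way_below_def by blast

lemma way_below_imp_subset:
  assumes "way_below A a u" "u \<in> A"
  shows "a \<subseteq> u"
proof -
  obtain S' where "S' \<subseteq> {u}" "a \<subseteq> frame_join A S'"
    using way_belowD[OF assms(1), of "{u}"] assms(2) frame_join_upper[of "{u}" A] by auto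
  moreover have "frame_join A S' \<subseteq> u" using \<open>S' \<subseteq> {u}\<close> assms(2) by (intro frame_join_least) auto
  ultimately show ?thesis by blast
qed

lemma way_below_mono_right: "way_below A a u \<Longrightarrow> u \<subseteq> u' \<Longrightarrow> way_below A a u'"
  by (rule way_belowI) (meson way_belowD order_trans)

lemma way_below_mono_left: "a' \<subseteq> a \<Longrightarrow> way_below A a u \<Longrightarrow> way_below A a' u"
  by (rule way_belowI) (meson way_belowD order_trans)

lemma way_below_finite_join:
  assumes A: "is_frame A" and fin: "finite T" and "T \<subseteq> A" and wb: "\<forall>t\<in>T. way_below A t u"
  shows "way_below A (frame_join A T) u"
proof (rule way_belowI)
  fix S assume S: "S \<subseteq> A" and uS: "u \<subseteq> frame_join A S"
  have "\<forall>t\<in>T. \<exists>S'. S' \<subseteq> S \<and> finite S' \<and> t \<subseteq> frame_join A S'"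
    using way_belowD[OF _ S uS] wb by blast
  then obtain f where f: "\<forall>t\<in>T. f t \<subseteq> S \<and> finite (f t) \<and> t \<subseteq> frame_join A (f t)"
    by (rule bchoice[THEN exE])
  let ?S' = "\<Union>(f ` T)"
  have S'S: "?S' \<subseteq> S" and "finite ?S'" using f fin by auto
  have "\<Union>T \<subseteq> frame_join A ?S'"
  proof
    fix x assume "x \<in> \<Union>T"
    then obtain t where t: "t \<in> T" "x \<in> t" by blast
    have "frame_join A (f t) \<subseteq> frame_join A ?S'"
      using t(1) S'S S by (intro frame_join_mono[OF A]) auto
    with f t show "x \<in> frame_join A ?S'" by blast
  qed
  then have "frame_join A T \<subseteq> frame_join A ?S'"
    using S'S S by (intro frame_join_least frame_join_closed[OF A]) auto
  with S'S \<open>finite ?S'\<close> show "\<exists>S'\<subseteq>S. finite S' \<and> frame_join A T \<subseteq> frame_join A S'" by blast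
qed

lemma locally_compact_join:
  "locally_compact A \<Longrightarrow> u \<in> A \<Longrightarrow> frame_join A {a \<in> A. way_below A a u} = u"
  unfolding locally_compact_def by simp

lemma directed_in_finite_upper_bound:
  assumes D: "directed_in A D" and "finite F" "F \<subseteq> D"
  shows "\<exists>d\<in>D. \<forall>f\<in>F. f \<subseteq> d"
  using assms(2,3)
proof (induction F rule: finite_induct)
  case empty
  then show ?case using D unfolding directed_in_def by blast
next
  case (insert x F)
  then obtain d where "d \<in> D" "\<forall>f\<in>F. f \<subseteq> d" by auto
  moreover obtain z where "z \<in> D" "x \<subseteq> z" "d \<subseteq> z"
    using D insert.prems \<open>d \<in> D\<close> unfolding directed_in_def by (meson insert_subset)
  ultimately show ?case by (intro bexI[of _ z]) auto
qed

lemma scott_frame_subset: "U \<in> scott_frame A \<Longrightarrow> U \<subseteq> A"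
  unfolding scott_frame_def scott_open_def by simp

lemma scott_frame_upward: "U \<in> scott_frame A \<Longrightarrow> a \<in> U \<Longrightarrow> a \<subseteq> b \<Longrightarrow> b \<in> A \<Longrightarrow> b \<in> U"
  unfolding scott_frame_def scott_open_def by simp

lemma scott_frame_directed:
  "U \<in> scott_frame A \<Longrightarrow> directed_in A D \<Longrightarrow> frame_join A D \<in> U \<Longrightarrow> \<exists>d\<in>D. d \<in> U"
  unfolding scott_frame_def scott_open_def by auto

lemma scott_frameI:
  assumes "U \<subseteq> A" "\<And>a b. a \<in> U \<Longrightarrow> b \<in> A \<Longrightarrow> a \<subseteq> b \<Longrightarrow> b \<in> U"
    "\<And>D. directed_in A D \<Longrightarrow> frame_join A D \<in> U \<Longrightarrow> \<exists>d\<in>D. d \<in> U"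
  shows "U \<in> scott_frame A"
  unfolding scott_frame_def scott_open_def using assms by blast

lemma scott_frame_Union:
  assumes S: "S \<subseteq> scott_frame A"
  shows "\<Union>S \<in> scott_frame A"
proof (rule scott_frameI)
  show "\<Union>S \<subseteq> A" using S scott_frame_subset by blast
  show "b \<in> \<Union>S" if "a \<in> \<Union>S" "b \<in> A" "a \<subseteq> b" for a b
    using that S scott_frame_upward by blast
  show "\<exists>d\<in>D. d \<in> \<Union>S" if "directed_in A D" "frame_join A D \<in> \<Union>S" for D
    using that S scott_frame_directed by blast
qed

lemma scott_frame_join: "S \<subseteq> scott_frame A \<Longrightarrow> frame_join (scott_frame A) S = \<Union>S"
  by (rule frame_join_eq_Union, rule scott_frame_Union)

lemma scott_frame_join_closed: "S \<subseteq> scott_frame A \<Longrightarrow> frame_join (scott_frame A) S \<in> scott_frame A"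
  by (simp add: scott_frame_join scott_frame_Union)

lemma scott_frame_Int:
  assumes U: "U \<in> scott_frame A" and V: "V \<in> scott_frame A"
  shows "U \<inter> V \<in> scott_frame A"
proof (rule scott_frameI)
  show "U \<inter> V \<subseteq> A" using scott_frame_subset[OF U] by blast
  show "b \<in> U \<inter> V" if "a \<in> U \<inter> V" "b \<in> A" "a \<subseteq> b" for a b
    using that scott_frame_upward[OF U] scott_frame_upward[OF V] by blast
  show "\<exists>d\<in>D. d \<in> U \<inter> V" if D: "directed_in A D" and j: "frame_join A D \<in> U \<inter> V" for D
  proof -
    obtain d1 d2 where "d1 \<in> D" "d1 \<in> U" "d2 \<in> D" "d2 \<in> V"
      using scott_frame_directed[OF U D] scott_frame_directed[OF V D] j by blast
    moreover obtain d where "d \<in> D" "d1 \<subseteq> d" "d2 \<subseteq> d"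
      using D \<open>d1 \<in> D\<close> \<open>d2 \<in> D\<close> unfolding directed_in_def by blast
    moreover have "d \<in> A" using D \<open>d \<in> D\<close> unfolding directed_in_def by blast
    ultimately show ?thesis
      using scott_frame_upward[OF U, of d1 d] scott_frame_upward[OF V, of d2 d] by blast
  qed
qed

lemma top_in_scott_frame: "A \<in> scott_frame A"
  by (rule scott_frameI) (auto simp: directed_in_def)

lemma Union_scott_frame: "\<Union>(scott_frame A) = A"
  using top_in_scott_frame scott_frame_subset by blast

text \<open>The finite subjoins form a directed family with the same join.\<close>

lemma scott_frame_finite_join:
  assumes A: "is_frame A" and U: "U \<in> scott_frame A" and SA: "S \<subseteq> A" and j: "frame_join A S \<in> U"
  shows "\<exists>S'\<subseteq>S. finite S' \<and> frame_join A S' \<in> U"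
proof -
  define D where "D = {frame_join A S' | S'. S' \<subseteq> S \<and> finite S'}"
  have dir: "directed_in A D"
    unfolding directed_in_def
  proof (intro conjI ballI)
    show "D \<subseteq> A" unfolding D_def using frame_join_closed[OF A] SA by blast
    show "D \<noteq> {}" unfolding D_def by blast
  next
    fix x y assume "x \<in> D" "y \<in> D"
    then obtain S1 S2 where 1: "x = frame_join A S1" "S1 \<subseteq> S" "finite S1"
      and 2: "y = frame_join A S2" "S2 \<subseteq> S" "finite S2" unfolding D_def by blast
    have "S1 \<union> S2 \<subseteq> A" using 1 2 SA by blast
    then have "x \<subseteq> frame_join A (S1 \<union> S2)" "y \<subseteq> frame_join A (S1 \<union> S2)"
      using 1 2 frame_join_mono[OF A] by auto
    moreover have "frame_join A (S1 \<union> S2) \<in> D" unfolding D_def using 1 2 by blast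
    ultimately show "\<exists>z\<in>D. x \<subseteq> z \<and> y \<subseteq> z" by blast
  qed
  have "\<Union>S \<subseteq> \<Union>D"
  proof
    fix x assume "x \<in> \<Union>S"
    then obtain s where "s \<in> S" "x \<in> s" by blast
    moreover have "frame_join A {s} \<in> D" unfolding D_def using \<open>s \<in> S\<close> by blast
    ultimately show "x \<in> \<Union>D" using frame_join_upper[of "{s}" A] by blast
  qed
  moreover have "\<Union>D \<subseteq> c" if "c \<in> A" "\<Union>S \<subseteq> c" for c
    using that frame_join_least[of c A] unfolding D_def by blast
  ultimately have "frame_join A D = frame_join A S"
    unfolding frame_join_def by (intro arg_cong[where f = Inter]) blast
  with scott_frame_directed[OF U dir] j show ?thesis unfolding D_def by auto
qed

definition way_above :: "'a set set \<Rightarrow> 'a set \<Rightarrow> 'a set set" where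
  "way_above A a = {u \<in> A. way_below A a u}"

text \<open>Each d in D is the join of what is way below it, so a lies below a finite join of elements
way below members of D, and directedness puts all of these under a single member.\<close>

lemma way_below_directed_join:
  assumes A: "is_frame A" and lc: "locally_compact A" and D: "directed_in A D"
    and a: "way_below A a (frame_join A D)"
  shows "\<exists>d\<in>D. way_below A a d"
proof -
  have DA: "D \<subseteq> A" using D unfolding directed_in_def by simp
  define T where "T = {t \<in> A. \<exists>d\<in>D. way_below A t d}"
  have TA: "T \<subseteq> A" unfolding T_def by blast
  have "\<Union>D \<subseteq> frame_join A T"
  proof
    fix x assume "x \<in> \<Union>D"
    then obtain d where d: "d \<in> D" "x \<in> d" by blast
    have dA: "d \<in> A" using d(1) DA by blast
    have "{t \<in> A. way_below A t d} \<subseteq> T" unfolding T_def using d(1) by blast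
    then have "frame_join A {t \<in> A. way_below A t d} \<subseteq> frame_join A T"
      by (rule frame_join_mono[OF A _ TA])
    then show "x \<in> frame_join A T" using locally_compact_join[OF lc dA] d(2) by auto
  qed
  then have DT: "frame_join A D \<subseteq> frame_join A T"
    by (rule frame_join_least[OF frame_join_closed[OF A TA]])
  from way_belowD[OF a TA DT]
  obtain T' where T': "T' \<subseteq> T" "finite T'" "a \<subseteq> frame_join A T'" by blast
  have "\<forall>t\<in>T'. \<exists>d. d \<in> D \<and> way_below A t d" using T'(1) unfolding T_def by blast
  then obtain g where g: "\<forall>t\<in>T'. g t \<in> D \<and> way_below A t (g t)"
    by (rule bchoice[THEN exE])
  have "finite (g ` T')" "g ` T' \<subseteq> D" using T'(2) g by auto
  from directed_in_finite_upper_bound[OF D this] obtain d where d: "d \<in> D" "\<forall>f\<in>g ` T'. f \<subseteq> d"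
    by blast
  have "\<forall>t\<in>T'. way_below A t d"
  proof
    fix t assume t: "t \<in> T'"
    then have "way_below A t (g t)" "g t \<subseteq> d" using g d(2) by auto
    then show "way_below A t d" by (rule way_below_mono_right)
  qed
  with T'(1) TA have "way_below A (frame_join A T') d"
    by (intro way_below_finite_join[OF A T'(2)]) blast+
  then have "way_below A a d" by (rule way_below_mono_left[OF T'(3)])
  with d(1) show ?thesis by blast
qed

lemma way_above_in_scott_frame:
  assumes A: "is_frame A" and lc: "locally_compact A"
  shows "way_above A a \<in> scott_frame A"
proof (rule scott_frameI)
  show "way_above A a \<subseteq> A" unfolding way_above_def by blast
  show "b \<in> way_above A a" if "x \<in> way_above A a" "b \<in> A" "x \<subseteq> b" for x b
    using that way_below_mono_right[of A a x b] unfolding way_above_def by blast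
  show "\<exists>d\<in>D. d \<in> way_above A a" if D: "directed_in A D" and "frame_join A D \<in> way_above A a" for D
  proof -
    have "way_below A a (frame_join A D)" using that(2) unfolding way_above_def by blast
    from way_below_directed_join[OF A lc D this] obtain d where "d \<in> D" "way_below A a d" by blast
    moreover have "D \<subseteq> A" using D unfolding directed_in_def by simp
    ultimately show ?thesis unfolding way_above_def by blast
  qed
qed


lemma is_frame_scott_frame: "is_frame (scott_frame A)"
  unfolding is_frame_def
proof (intro conjI ballI allI impI)
  show "\<Union>(scott_frame A) \<in> scott_frame A"
    unfolding Union_scott_frame by (rule top_in_scott_frame)
  show "U \<inter> V \<in> scott_frame A" if "U \<in> scott_frame A" "V \<in> scott_frame A" for U V
    using scott_frame_Int that by blast
  show "frame_join (scott_frame A) S \<in> scott_frame A" if "S \<subseteq> scott_frame A" for S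
    using scott_frame_join_closed that by blast
  show "U \<inter> frame_join (scott_frame A) S = frame_join (scott_frame A) ((\<inter>) U ` S)"
    if U: "U \<in> scott_frame A" and S: "S \<subseteq> scott_frame A" for U S
  proof -
    have "(\<inter>) U ` S \<subseteq> scott_frame A" using scott_frame_Int[OF U] S by blast
    then have "frame_join (scott_frame A) ((\<inter>) U ` S) = U \<inter> \<Union>S" by (auto simp: scott_frame_join)
    with scott_frame_join[OF S] show ?thesis by simp
  qed
qed

lemma frame_hom_finite_Inter:
  assumes A: "is_frame A" and h: "frame_hom A B h" and "finite F" "F \<subseteq> A"
  shows "\<Union>A \<inter> \<Inter>F \<in> A \<and> h (\<Union>A \<inter> \<Inter>F) = \<Union>B \<inter> \<Inter>(h ` F)"
  using assms(3,4)
proof (induction F rule: finite_induct)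
  case empty
  then show ?case using frame_top_closed[OF A] frame_hom_top[OF h] by simp
next
  case (insert a F)
  then have IH: "\<Union>A \<inter> \<Inter>F \<in> A" "h (\<Union>A \<inter> \<Inter>F) = \<Union>B \<inter> \<Inter>(h ` F)" and a: "a \<in> A" by auto
  have eq: "\<Union>A \<inter> \<Inter>(insert a F) = a \<inter> (\<Union>A \<inter> \<Inter>F)" using a by blast
  have "h a \<subseteq> \<Union>B" using frame_hom_closed[OF h a] by blast
  then have "h (a \<inter> (\<Union>A \<inter> \<Inter>F)) = \<Union>B \<inter> \<Inter>(h ` insert a F)"
    using frame_hom_Int[OF h a IH(1)] IH(2) by auto
  with frame_Int_closed[OF A a IH(1)] show ?case unfolding eq by blast
qed

lemma frame_hom_scott_open_way_below:
  assumes A: "is_frame A" and lc: "locally_compact A" and B: "is_frame B"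
    and h: "frame_hom A B h" and U: "U \<in> scott_frame B" and b: "b \<in> A" and hb: "h b \<in> U"
  shows "\<exists>c\<in>A. way_below A c b \<and> h c \<in> U"
proof -
  let ?S = "{c \<in> A. way_below A c b}"
  have SA: "?S \<subseteq> A" by blast
  have "h b = frame_join B (h ` ?S)"
    using frame_hom_join[OF h SA] locally_compact_join[OF lc b] by simp
  moreover have hS: "h ` ?S \<subseteq> B" using frame_hom_closed[OF h] by blast
  ultimately obtain S' where S': "S' \<subseteq> h ` ?S" "finite S'" "frame_join B S' \<in> U"
    using scott_frame_finite_join[OF B U hS] hb by auto
  then obtain T where T: "T \<subseteq> ?S" "finite T" "S' = h ` T"
    by (meson finite_subset_image)
  have TA: "T \<subseteq> A" using T(1) by blast
  have "way_below A (frame_join A T) b"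
    using T(1) by (intro way_below_finite_join[OF A T(2) TA]) blast
  moreover have "h (frame_join A T) \<in> U"
    using frame_hom_join[OF h TA] S'(3) T(3) by simp
  ultimately show ?thesis using frame_join_closed[OF A TA] by blast
qed

lemma scott_frame_eq_Union_way_above:
  assumes A: "is_frame A" and lc: "locally_compact A" and U: "U \<in> scott_frame A"
  shows "U = \<Union>(way_above A ` U)"
proof
  show "U \<subseteq> \<Union>(way_above A ` U)"
  proof
    fix u assume u: "u \<in> U"
    then have uA: "u \<in> A" using scott_frame_subset[OF U] by blast
    from frame_hom_scott_open_way_below[OF A lc A frame_hom_id U uA] u
    obtain a where "a \<in> U" "way_below A a u" by auto
    with uA show "u \<in> \<Union>(way_above A ` U)" unfolding way_above_def by blast
  qed
  show "\<Union>(way_above A ` U) \<subseteq> U"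
  proof
    fix u assume "u \<in> \<Union>(way_above A ` U)"
    then obtain a where "a \<in> U" "u \<in> A" "way_below A a u" unfolding way_above_def by blast
    then show "u \<in> U" using scott_frame_upward[OF U] way_below_imp_subset by blast
  qed
qed

subsection \<open>The free frame\<close>

lemma free_frameI:
  "U \<subseteq> fin_subsets G \<Longrightarrow> (\<And>K K'. K \<in> U \<Longrightarrow> K' \<in> fin_subsets G \<Longrightarrow> K \<subseteq> K' \<Longrightarrow> K' \<in> U)
    \<Longrightarrow> U \<in> free_frame G"
  unfolding free_frame_def by blast

lemma free_frame_subset: "U \<in> free_frame G \<Longrightarrow> U \<subseteq> fin_subsets G"
  unfolding free_frame_def by blast

lemma free_frame_upward: "U \<in> free_frame G \<Longrightarrow> K \<in> U \<Longrightarrow> K' \<in> fin_subsets G \<Longrightarrow> K \<subseteq> K' \<Longrightarrow> K' \<in> U"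
  unfolding free_frame_def by blast

lemma free_frame_Union:
  assumes S: "S \<subseteq> free_frame G"
  shows "\<Union>S \<in> free_frame G"
proof (rule free_frameI)
  show "\<Union>S \<subseteq> fin_subsets G" using S free_frame_subset by blast
  show "K' \<in> \<Union>S" if K: "K \<in> \<Union>S" "K' \<in> fin_subsets G" "K \<subseteq> K'" for K K'
  proof -
    obtain U where U: "U \<in> S" "K \<in> U" using K(1) by blast
    then have "K' \<in> U" using S free_frame_upward[of U G K K'] K(2,3) by blast
    with U(1) show ?thesis by blast
  qed
qed

lemma free_frame_join: "S \<subseteq> free_frame G \<Longrightarrow> frame_join (free_frame G) S = \<Union>S"
  by (rule frame_join_eq_Union, rule free_frame_Union)

lemma free_frame_Int:
  assumes U: "U \<in> free_frame G" and V: "V \<in> free_frame G"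
  shows "U \<inter> V \<in> free_frame G"
proof (rule free_frameI)
  show "U \<inter> V \<subseteq> fin_subsets G" using free_frame_subset[OF U] by blast
  show "K' \<in> U \<inter> V" if "K \<in> U \<inter> V" "K' \<in> fin_subsets G" "K \<subseteq> K'" for K K'
    using free_frame_upward[OF U _ that(2,3)] free_frame_upward[OF V _ that(2,3)] that(1) by blast
qed

lemma is_frame_free_frame: "is_frame (free_frame G)"
  unfolding is_frame_def
proof (intro conjI ballI allI impI)
  show "\<Union>(free_frame G) \<in> free_frame G" by (rule free_frame_Union) simp
  show "a \<inter> b \<in> free_frame G" if "a \<in> free_frame G" "b \<in> free_frame G" for a b
    using free_frame_Int that by blast
  show "frame_join (free_frame G) S \<in> free_frame G" if "S \<subseteq> free_frame G" for S
    using free_frame_join[OF that] free_frame_Union[OF that] by simp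
  show "a \<inter> frame_join (free_frame G) S = frame_join (free_frame G) ((\<inter>) a ` S)"
    if a: "a \<in> free_frame G" and S: "S \<subseteq> free_frame G" for a S
  proof -
    have "(\<inter>) a ` S \<subseteq> free_frame G" using free_frame_Int[OF a] S by blast
    then have "frame_join (free_frame G) ((\<inter>) a ` S) = a \<inter> \<Union>S" by (auto simp: free_frame_join)
    with free_frame_join[OF S] show ?thesis by simp
  qed
qed

definition principal_upset :: "'g set \<Rightarrow> 'g set \<Rightarrow> 'g set set" where
  "principal_upset G K = {K' \<in> fin_subsets G. K \<subseteq> K'}"

lemma principal_upset_in_free_frame: "principal_upset G K \<in> free_frame G"
  by (rule free_frameI) (auto simp: principal_upset_def)

lemma principal_upset_way_below:
  assumes b: "b \<in> free_frame G" and K: "K \<in> b"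
  shows "way_below (free_frame G) (principal_upset G K) b"
proof (rule way_belowI)
  fix S assume S: "S \<subseteq> free_frame G" and "b \<subseteq> frame_join (free_frame G) S"
  then obtain s where s: "s \<in> S" "K \<in> s" using K free_frame_join[OF S] by blast
  then have sG: "s \<in> free_frame G" using S by blast
  have "principal_upset G K \<subseteq> s"
    using free_frame_upward[OF sG s(2)] unfolding principal_upset_def by blast
  then have "principal_upset G K \<subseteq> frame_join (free_frame G) {s}"
    using frame_join_singleton[OF sG] by simp
  with s(1) show "\<exists>S'\<subseteq>S. finite S' \<and> principal_upset G K \<subseteq> frame_join (free_frame G) S'"
    by (intro exI[of _ "{s}"]) auto
qed

lemma locally_compact_free_frame: "locally_compact (free_frame G)"
  unfolding locally_compact_def
proof
  fix b assume b: "b \<in> free_frame G"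
  let ?S = "{a \<in> free_frame G. way_below (free_frame G) a b}"
  have "\<Union>?S \<subseteq> b" using way_below_imp_subset[of "free_frame G" _ b] b by blast
  moreover have "b \<subseteq> \<Union>?S"
  proof
    fix K assume K: "K \<in> b"
    then have "K \<in> principal_upset G K"
      using free_frame_subset[OF b] unfolding principal_upset_def by blast
    with principal_upset_in_free_frame principal_upset_way_below[OF b K] show "K \<in> \<Union>?S" by blast
  qed
  ultimately have "b = \<Union>?S" by blast
  then show "b = frame_join (free_frame G) ?S" using free_frame_join[of ?S G] by simp
qed

subsection \<open>Tensor products and product maps\<close>

lemma C_ideal_subset: "C_ideal A B D \<Longrightarrow> D \<subseteq> A \<times> B"
  unfolding C_ideal_def by simp

lemma C_ideal_down:
  assumes "C_ideal A B D" "(a, b) \<in> D" "a' \<in> A" "b' \<in> B" "a' \<subseteq> a" "b' \<subseteq> b"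
  shows "(a', b') \<in> D"
proof -
  have "\<forall>a b a' b'. (a, b) \<in> D \<longrightarrow> a' \<in> A \<longrightarrow> b' \<in> B \<longrightarrow> a' \<subseteq> a \<longrightarrow> b' \<subseteq> b \<longrightarrow> (a', b') \<in> D"
    using assms(1) unfolding C_ideal_def by (elim conjE) assumption
  then show ?thesis using assms(2-) by blast
qed

lemma C_ideal_join_left:
  assumes "C_ideal A B D" "S \<subseteq> A" "b \<in> B" "\<forall>a\<in>S. (a, b) \<in> D"
  shows "(frame_join A S, b) \<in> D"
proof -
  have "\<forall>S\<subseteq>A. \<forall>b\<in>B. (\<forall>a\<in>S. (a, b) \<in> D) \<longrightarrow> (frame_join A S, b) \<in> D"
    using assms(1) unfolding C_ideal_def by (elim conjE) assumption
  then show ?thesis using assms(2-) by blast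
qed

lemma C_ideal_join_right:
  assumes "C_ideal A B D" "S \<subseteq> B" "a \<in> A" "\<forall>b\<in>S. (a, b) \<in> D"
  shows "(a, frame_join B S) \<in> D"
proof -
  have "\<forall>S\<subseteq>B. \<forall>a\<in>A. (\<forall>b\<in>S. (a, b) \<in> D) \<longrightarrow> (a, frame_join B S) \<in> D"
    using assms(1) unfolding C_ideal_def by (elim conjE) assumption
  then show ?thesis using assms(2-) by blast
qed

lemma C_idealI:
  assumes "D \<subseteq> A \<times> B"
    and "\<And>a b a' b'. (a, b) \<in> D \<Longrightarrow> a' \<in> A \<Longrightarrow> b' \<in> B \<Longrightarrow> a' \<subseteq> a \<Longrightarrow> b' \<subseteq> b \<Longrightarrow> (a', b') \<in> D"
    and "\<And>S b. S \<subseteq> A \<Longrightarrow> b \<in> B \<Longrightarrow> \<forall>a\<in>S. (a, b) \<in> D \<Longrightarrow> (frame_join A S, b) \<in> D"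
    and "\<And>S a. S \<subseteq> B \<Longrightarrow> a \<in> A \<Longrightarrow> \<forall>b\<in>S. (a, b) \<in> D \<Longrightarrow> (a, frame_join B S) \<in> D"
  shows "C_ideal A B D"
  unfolding C_ideal_def using assms by (intro conjI allI impI ballI) simp_all

lemma mem_tensor_iff: "D \<in> tensor A B \<longleftrightarrow> C_ideal A B D"
  unfolding tensor_def by simp

lemma pair_in_tens: "(u, v) \<in> tens A B u v"
  unfolding tens_def by blast

lemma tens_subset: "D \<in> tensor A B \<Longrightarrow> (u, v) \<in> D \<Longrightarrow> tens A B u v \<subseteq> D"
  unfolding tens_def by blast

lemma C_ideal_Inter:
  assumes "F \<noteq> {}" and all: "\<forall>D\<in>F. C_ideal A B D"
  shows "C_ideal A B (\<Inter>F)"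
proof (rule C_idealI)
  show "\<Inter>F \<subseteq> A \<times> B" using assms C_ideal_subset by blast
  show "(a', b') \<in> \<Inter>F" if "(a, b) \<in> \<Inter>F" "a' \<in> A" "b' \<in> B" "a' \<subseteq> a" "b' \<subseteq> b" for a b a' b'
  proof
    fix D assume "D \<in> F"
    with that all show "(a', b') \<in> D" using C_ideal_down[of A B D a b a' b'] by simp
  qed
  show "(frame_join A S, b) \<in> \<Inter>F" if "S \<subseteq> A" "b \<in> B" "\<forall>a\<in>S. (a, b) \<in> \<Inter>F" for S b
  proof
    fix D assume "D \<in> F"
    with that all show "(frame_join A S, b) \<in> D" using C_ideal_join_left[of A B D S b] by simp
  qed
  show "(a, frame_join B S) \<in> \<Inter>F" if "S \<subseteq> B" "a \<in> A" "\<forall>b\<in>S. (a, b) \<in> \<Inter>F" for S a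
  proof
    fix D assume "D \<in> F"
    with that all show "(a, frame_join B S) \<in> D" using C_ideal_join_right[of A B D S a] by simp
  qed
qed

lemma C_ideal_Times:
  assumes "is_frame A" "is_frame B"
  shows "C_ideal A B (A \<times> B)"
proof (rule C_idealI)
  show "(frame_join A S, b) \<in> A \<times> B" if "S \<subseteq> A" "b \<in> B" for S b
    using frame_join_closed[OF assms(1) that(1)] that(2) by blast
  show "(a, frame_join B S) \<in> A \<times> B" if "S \<subseteq> B" "a \<in> A" for S a
    using frame_join_closed[OF assms(2) that(1)] that(2) by blast
qed auto

lemma frame_join_tensor_closed:
  assumes "is_frame A" "is_frame B" and S: "\<Union>S \<subseteq> A \<times> B"
  shows "frame_join (tensor A B) S \<in> tensor A B"
proof -
  let ?F = "{c \<in> tensor A B. \<Union>S \<subseteq> c}"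
  have "A \<times> B \<in> ?F" using C_ideal_Times[OF assms(1,2)] S mem_tensor_iff by blast
  then have "C_ideal A B (\<Inter>?F)" by (intro C_ideal_Inter) (auto simp: mem_tensor_iff)
  then show ?thesis unfolding frame_join_def mem_tensor_iff .
qed

lemma pair_in_prod_hom: "(u, v) \<in> D \<Longrightarrow> (f u, g v) \<in> prod_hom A B f g D"
proof -
  assume "(u, v) \<in> D"
  then have "tens A B (f u) (g v) \<subseteq> \<Union>{tens A B (f u) (g v) | u v. (u, v) \<in> D}" by blast
  also have "\<dots> \<subseteq> prod_hom A B f g D" unfolding prod_hom_def by (rule frame_join_upper)
  finally show ?thesis using pair_in_tens by blast
qed

lemma prod_hom_subset:
  assumes F: "F \<in> tensor A B" and H: "\<forall>(u, v)\<in>D. (f u, g v) \<in> F"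
  shows "prod_hom A B f g D \<subseteq> F"
  unfolding prod_hom_def
proof (rule frame_join_least[OF F], rule Union_least)
  fix T assume "T \<in> {tens A B (f u) (g v) | u v. (u, v) \<in> D}"
  then obtain u v where uv: "(u, v) \<in> D" and T: "T = tens A B (f u) (g v)" by blast
  from H uv have "(f u, g v) \<in> F" by blast
  then show "T \<subseteq> F" unfolding T by (rule tens_subset[OF F])
qed

subsection \<open>The evaluation map\<close>

text \<open>The Sierpinski frame is generated by {{()}}, the up-set of the one-element set.\<close>

lemma generator_in_Sierpinski_frame: "{{()}} \<in> Sierpinski_frame"
  by (rule free_frameI) (auto simp: fin_subsets_def)

lemma ev_hom_generator:
  "ev_hom A {{()}}
     = frame_join (tensor (scott_frame A) A) {ev_elem A \<inter> \<Union>(tensor (scott_frame A) A)}"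
proof -
  have "{\<Inter>((\<lambda>_. ev_elem A) ` K) \<inter> \<Union>(tensor (scott_frame A) A) | K. K \<in> {{()}}}
     = {ev_elem A \<inter> \<Union>(tensor (scott_frame A) A)}" by auto
  then show ?thesis unfolding ev_hom_def free_ext_def by simp
qed

lemma ev_hom_in_tensor:
  assumes "is_frame A"
  shows "ev_hom A W \<in> tensor (scott_frame A) A"
  unfolding ev_hom_def free_ext_def
proof (rule frame_join_tensor_closed[OF is_frame_scott_frame assms])
  have "\<Union>(tensor (scott_frame A) A) \<subseteq> scott_frame A \<times> A"
    using C_ideal_subset mem_tensor_iff by blast
  then show "\<Union>{\<Inter>((\<lambda>_. ev_elem A) ` K) \<inter> \<Union>(tensor (scott_frame A) A) | K. K \<in> W}
      \<subseteq> scott_frame A \<times> A" by blast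
qed

lemma way_above_pair_in_ev_hom:
  assumes A: "is_frame A" and lc: "locally_compact A" and a: "a \<in> A"
  shows "(way_above A a, a) \<in> ev_hom A {{()}}"
proof -
  let ?T = "tensor (scott_frame A) A"
  have "tens (scott_frame A) A (way_above A a) a \<subseteq> ev_elem A"
    unfolding ev_elem_def way_above_def[symmetric]
    using frame_join_upper[of "{tens (scott_frame A) A (way_above A a) a | a. a \<in> A}" ?T] a by blast
  then have ev: "(way_above A a, a) \<in> ev_elem A" using pair_in_tens by blast
  have "scott_frame A \<times> A \<in> ?T"
    using C_ideal_Times[OF is_frame_scott_frame A] by (simp add: mem_tensor_iff)
  with way_above_in_scott_frame[OF A lc] a have "(way_above A a, a) \<in> \<Union>?T" by blast
  with ev show ?thesis
    unfolding ev_hom_generator using frame_join_upper[of "{ev_elem A \<inter> \<Union>?T}" ?T] by blast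
qed

text \<open>The C-ideals lower_pairs and neighbourhood_pairs bound the two transported evaluation maps
from above; reading off the basic pairs of each inside the other determines q.\<close>

definition lower_pairs :: "'a set set \<Rightarrow> 'b set set \<Rightarrow> ('a set \<Rightarrow> 'b set) \<Rightarrow> ('a set set \<times> 'b set) set" where
  "lower_pairs A B h = {(V, y). V \<in> scott_frame A \<and> y \<in> B \<and> (\<forall>b\<in>V. y \<subseteq> h b)}"

lemma lower_pairs_in_tensor:
  assumes B: "is_frame B" and h: "frame_hom A B h"
  shows "lower_pairs A B h \<in> tensor (scott_frame A) B"
  unfolding mem_tensor_iff
proof (rule C_idealI)
  show "lower_pairs A B h \<subseteq> scott_frame A \<times> B" unfolding lower_pairs_def by blast
  show "(V', y') \<in> lower_pairs A B h"
    if "(V, y) \<in> lower_pairs A B h" "V' \<in> scott_frame A" "y' \<in> B" "V' \<subseteq> V" "y' \<subseteq> y" for V y V' y'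
    using that unfolding lower_pairs_def by blast
  show "(frame_join (scott_frame A) S, y) \<in> lower_pairs A B h"
    if S: "S \<subseteq> scott_frame A" and "y \<in> B" "\<forall>V\<in>S. (V, y) \<in> lower_pairs A B h" for S y
    using that scott_frame_Union[OF S] unfolding scott_frame_join[OF S] lower_pairs_def by blast
  show "(V, frame_join B S) \<in> lower_pairs A B h"
    if S: "S \<subseteq> B" and V: "V \<in> scott_frame A" and H: "\<forall>y\<in>S. (V, y) \<in> lower_pairs A B h" for S V
  proof -
    have "frame_join B S \<subseteq> h b" if "b \<in> V" for b
    proof (rule frame_join_least)
      show "h b \<in> B" using frame_hom_closed[OF h] that scott_frame_subset[OF V] by blast
      show "\<Union>S \<subseteq> h b" using H that unfolding lower_pairs_def by blast
    qed
    then show ?thesis using V frame_join_closed[OF B S] unfolding lower_pairs_def by blast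
  qed
qed

lemma ev_hom_generator_subset:
  assumes A: "is_frame A" and lc: "locally_compact A"
  shows "ev_hom A {{()}} \<subseteq> lower_pairs A A id"
proof -
  let ?T = "tensor (scott_frame A) A"
  have L: "lower_pairs A A id \<in> ?T" by (rule lower_pairs_in_tensor[OF A frame_hom_id])
  have "ev_elem A \<subseteq> lower_pairs A A id"
    unfolding ev_elem_def
  proof (rule frame_join_least[OF L], rule Union_least)
    fix E assume "E \<in> {tens (scott_frame A) A {u \<in> A. way_below A a u} a | a. a \<in> A}"
    then obtain a where a: "a \<in> A" and E: "E = tens (scott_frame A) A (way_above A a) a"
      unfolding way_above_def by blast
    have "\<forall>u\<in>way_above A a. a \<subseteq> u"
      using way_below_imp_subset unfolding way_above_def by blast
    then have "(way_above A a, a) \<in> lower_pairs A A id"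
      using way_above_in_scott_frame[OF A lc] a unfolding lower_pairs_def by simp
    then show "E \<subseteq> lower_pairs A A id" unfolding E by (rule tens_subset[OF L])
  qed
  then show ?thesis unfolding ev_hom_generator by (intro frame_join_least[OF L]) blast
qed

lemma prod_hom_ev_hom_subset_lower_pairs:
  assumes A: "is_frame A" and lc: "locally_compact A" and B: "is_frame B" and h: "frame_hom A B h"
  shows "prod_hom (scott_frame A) B id h (ev_hom A {{()}}) \<subseteq> lower_pairs A B h"
proof (rule prod_hom_subset[OF lower_pairs_in_tensor[OF B h]], clarify)
  fix V y assume "(V, y) \<in> ev_hom A {{()}}"
  then have V: "V \<in> scott_frame A" and y: "y \<in> A" and le: "\<forall>b\<in>V. y \<subseteq> b"
    using ev_hom_generator_subset[OF A lc] unfolding lower_pairs_def by auto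
  have "\<forall>b\<in>V. h y \<subseteq> h b"
    using frame_hom_mono[OF h y] le scott_frame_subset[OF V] by blast
  then show "(id V, h y) \<in> lower_pairs A B h"
    using V frame_hom_closed[OF h y] unfolding lower_pairs_def by simp
qed

lemma scott_frame_finite_way_below_join:
  assumes X: "is_frame X" and lc: "locally_compact X" and U: "U \<in> scott_frame X"
    and S: "S \<subseteq> X" and j: "frame_join X S \<in> U"
  shows "\<exists>T. finite T \<and> T \<subseteq> X \<and> (\<forall>a\<in>T. \<exists>y\<in>S. way_below X a y) \<and> frame_join X T \<in> U"
proof -
  define T where "T = {a \<in> X. \<exists>y\<in>S. way_below X a y}"
  have TX: "T \<subseteq> X" unfolding T_def by blast
  have "\<Union>S \<subseteq> frame_join X T"
  proof
    fix x assume "x \<in> \<Union>S"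
    then obtain y where y: "y \<in> S" "x \<in> y" by blast
    have yX: "y \<in> X" using y(1) S by blast
    have "{a \<in> X. way_below X a y} \<subseteq> T" unfolding T_def using y(1) by blast
    then have "frame_join X {a \<in> X. way_below X a y} \<subseteq> frame_join X T"
      by (rule frame_join_mono[OF X _ TX])
    then show "x \<in> frame_join X T" using locally_compact_join[OF lc yX] y(2) by auto
  qed
  then have "frame_join X S \<subseteq> frame_join X T"
    by (rule frame_join_least[OF frame_join_closed[OF X TX]])
  then have "frame_join X T \<in> U"
    using scott_frame_upward[OF U j] frame_join_closed[OF X TX] by blast
  from scott_frame_finite_join[OF X U TX this] obtain T' where
    "T' \<subseteq> T" "finite T'" "frame_join X T' \<in> U" by blast
  then show ?thesis using TX unfolding T_def by blast
qed

lemma Inter_way_above_subset: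
  assumes U: "U \<in> scott_frame X" and j: "frame_join X T \<in> U"
  shows "X \<inter> \<Inter>(way_above X ` T) \<subseteq> U"
proof
  fix v assume v: "v \<in> X \<inter> \<Inter>(way_above X ` T)"
  then have "\<Union>T \<subseteq> v" using way_below_imp_subset unfolding way_above_def by blast
  then have "frame_join X T \<subseteq> v" using v by (intro frame_join_least) blast+
  then show "v \<in> U" using scott_frame_upward[OF U j] v by blast
qed

definition neighbourhood_pairs ::
  "'a set set \<Rightarrow> 'x set set \<Rightarrow> ('x set set \<Rightarrow> 'a set set) \<Rightarrow> ('a set set \<times> 'x set) set" where
  "neighbourhood_pairs A X q =
     {(w, x). w \<in> scott_frame A \<and> x \<in> X \<and> (\<forall>U\<in>scott_frame X. x \<in> U \<longrightarrow> w \<subseteq> q U)}"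

text \<open>U contains the join of finitely many a, each way below some member of S, so w lies below
every q (way_above a); q preserves the finite meet of these Scott-open sets, which lies inside U.\<close>

lemma neighbourhood_pairs_join_right:
  assumes X: "is_frame X" and lc: "locally_compact X"
    and q: "frame_hom (scott_frame X) (scott_frame A) q"
    and w: "w \<in> scott_frame A" and S: "S \<subseteq> X" and H: "\<forall>y\<in>S. (w, y) \<in> neighbourhood_pairs A X q"
    and U: "U \<in> scott_frame X" and j: "frame_join X S \<in> U"
  shows "w \<subseteq> q U"
proof -
  obtain T where T: "finite T" "T \<subseteq> X" "\<forall>a\<in>T. \<exists>y\<in>S. way_below X a y" "frame_join X T \<in> U"
    using scott_frame_finite_way_below_join[OF X lc U S j] by blast
  let ?F = "way_above X ` T"
  have F: "?F \<subseteq> scott_frame X" using way_above_in_scott_frame[OF X lc] by blast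
  have "finite ?F" using T(1) by (rule finite_imageI)
  note Inter_F = frame_hom_finite_Inter[OF is_frame_scott_frame q this F, unfolded Union_scott_frame]
  have V: "X \<inter> \<Inter>?F \<in> scott_frame X" by (rule conjunct1[OF Inter_F])
  have qV: "q (X \<inter> \<Inter>?F) = A \<inter> \<Inter>(q ` ?F)" by (rule conjunct2[OF Inter_F])
  have wq: "w \<subseteq> q (way_above X a)" if a: "a \<in> T" for a
  proof -
    obtain y where y: "y \<in> S" "way_below X a y" using T(3) a by blast
    then have "y \<in> way_above X a" using S unfolding way_above_def by blast
    moreover have "way_above X a \<in> scott_frame X" using F a by blast
    moreover have "\<forall>V\<in>scott_frame X. y \<in> V \<longrightarrow> w \<subseteq> q V"
      using H y(1) by (simp add: neighbourhood_pairs_def)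
    ultimately show ?thesis by blast
  qed
  have "w \<subseteq> A \<inter> \<Inter>(q ` ?F)"
  proof
    fix x assume x: "x \<in> w"
    then have "x \<in> A" using scott_frame_subset[OF w] by blast
    moreover have "\<forall>a\<in>T. x \<in> q (way_above X a)" using wq x by blast
    ultimately show "x \<in> A \<inter> \<Inter>(q ` ?F)" by simp
  qed
  then have "w \<subseteq> q (X \<inter> \<Inter>?F)" unfolding qV .
  also have "\<dots> \<subseteq> q U"
    using frame_hom_mono[OF q V U Inter_way_above_subset[OF U T(4)]] .
  finally show ?thesis .
qed

lemma neighbourhood_pairs_in_tensor:
  assumes X: "is_frame X" and lc: "locally_compact X"
    and q: "frame_hom (scott_frame X) (scott_frame A) q"
  shows "neighbourhood_pairs A X q \<in> tensor (scott_frame A) X"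
  unfolding mem_tensor_iff
proof (rule C_idealI)
  show "neighbourhood_pairs A X q \<subseteq> scott_frame A \<times> X"
    unfolding neighbourhood_pairs_def by blast
  show "(w', x') \<in> neighbourhood_pairs A X q"
    if "(w, x) \<in> neighbourhood_pairs A X q" "w' \<in> scott_frame A" "x' \<in> X" "w' \<subseteq> w" "x' \<subseteq> x"
    for w x w' x'
  proof -
    have x: "x \<in> X" and le: "\<forall>U\<in>scott_frame X. x \<in> U \<longrightarrow> w \<subseteq> q U"
      using that(1) unfolding neighbourhood_pairs_def by auto
    have "w' \<subseteq> q U" if "U \<in> scott_frame X" "x' \<in> U" for U
      using le scott_frame_upward[OF that \<open>x' \<subseteq> x\<close> x] \<open>w' \<subseteq> w\<close> that(1) by blast
    then show ?thesis using that(2,3) unfolding neighbourhood_pairs_def by blast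
  qed
  show "(frame_join (scott_frame A) S, x) \<in> neighbourhood_pairs A X q"
    if S: "S \<subseteq> scott_frame A" and x: "x \<in> X" and H: "\<forall>w\<in>S. (w, x) \<in> neighbourhood_pairs A X q"
    for S x
  proof -
    have "\<Union>S \<subseteq> q U" if "U \<in> scott_frame X" "x \<in> U" for U
    proof
      fix z assume "z \<in> \<Union>S"
      then obtain w where "w \<in> S" "z \<in> w" by blast
      with H that show "z \<in> q U" unfolding neighbourhood_pairs_def by blast
    qed
    then show ?thesis
      using scott_frame_Union[OF S] x unfolding scott_frame_join[OF S] neighbourhood_pairs_def by blast
  qed
  show "(w, frame_join X S) \<in> neighbourhood_pairs A X q"
    if "S \<subseteq> X" "w \<in> scott_frame A" "\<forall>x\<in>S. (w, x) \<in> neighbourhood_pairs A X q" for S w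
  proof -
    have "\<forall>U\<in>scott_frame X. frame_join X S \<in> U \<longrightarrow> w \<subseteq> q U"
      using neighbourhood_pairs_join_right[OF X lc q that(2,1,3)] by blast
    then show ?thesis
      using that(2) frame_join_closed[OF X that(1)] unfolding neighbourhood_pairs_def by blast
  qed
qed

lemma prod_hom_ev_hom_subset_neighbourhood_pairs:
  assumes X: "is_frame X" and lc: "locally_compact X"
    and q: "frame_hom (scott_frame X) (scott_frame A) q"
  shows "prod_hom (scott_frame A) X q id (ev_hom X {{()}}) \<subseteq> neighbourhood_pairs A X q"
proof (rule prod_hom_subset[OF neighbourhood_pairs_in_tensor[OF X lc q]], clarify)
  fix V x assume "(V, x) \<in> ev_hom X {{()}}"
  then have V: "V \<in> scott_frame X" and x: "x \<in> X" and le: "\<forall>b\<in>V. x \<subseteq> b"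
    using ev_hom_generator_subset[OF X lc] unfolding lower_pairs_def by auto
  have "q V \<subseteq> q U" if U: "U \<in> scott_frame X" "x \<in> U" for U
  proof -
    have "V \<subseteq> U" using le scott_frame_upward[OF U] scott_frame_subset[OF V] by blast
    then show ?thesis by (rule frame_hom_mono[OF q V U(1)])
  qed
  then show "(q V, id x) \<in> neighbourhood_pairs A X q"
    using frame_hom_closed[OF q V] x unfolding neighbourhood_pairs_def by simp
qed

lemma exponential_map_eq_preimage:
  assumes A: "is_frame A" and lcA: "locally_compact A" and X: "is_frame X" and lcX: "locally_compact X"
    and h: "frame_hom A X h" and q: "frame_hom (scott_frame X) (scott_frame A) q"
    and compat: "prod_hom (scott_frame A) X q id (ev_hom X {{()}})
                   = prod_hom (scott_frame A) X id h (ev_hom A {{()}})"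
    and U: "U \<in> scott_frame X"
  shows "q U = {b \<in> A. h b \<in> U}"
proof
  show "q U \<subseteq> {b \<in> A. h b \<in> U}"
  proof
    fix b assume b: "b \<in> q U"
    have F: "way_above X ` U \<subseteq> scott_frame X" using way_above_in_scott_frame[OF X lcX] by blast
    then have "q ` way_above X ` U \<subseteq> scott_frame A" using frame_hom_closed[OF q] by blast
    then have "q U = \<Union>(q ` way_above X ` U)"
      using scott_frame_eq_Union_way_above[OF X lcX U] frame_hom_join[OF q F]
      by (simp add: scott_frame_join[OF F] scott_frame_join)
    then obtain a where a: "a \<in> U" and ba: "b \<in> q (way_above X a)" using b by auto
    have aX: "a \<in> X" using a scott_frame_subset[OF U] by blast
    have "(q (way_above X a), a) \<in> lower_pairs A X h"
      using pair_in_prod_hom[OF way_above_pair_in_ev_hom[OF X lcX aX], of q id] compat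
        prod_hom_ev_hom_subset_lower_pairs[OF A lcA X h] by auto
    then have "b \<in> A" "a \<subseteq> h b"
      using ba scott_frame_subset unfolding lower_pairs_def by auto
    then show "b \<in> {b \<in> A. h b \<in> U}"
      using scott_frame_upward[OF U a] frame_hom_closed[OF h] by blast
  qed
  show "{b \<in> A. h b \<in> U} \<subseteq> q U"
  proof clarify
    fix b assume b: "b \<in> A" and hb: "h b \<in> U"
    obtain c where c: "c \<in> A" "way_below A c b" "h c \<in> U"
      using frame_hom_scott_open_way_below[OF A lcA X h U b hb] by blast
    have "(way_above A c, h c) \<in> neighbourhood_pairs A X q"
      using pair_in_prod_hom[OF way_above_pair_in_ev_hom[OF A lcA c(1)], of id h] compat
        prod_hom_ev_hom_subset_neighbourhood_pairs[OF X lcX q] by auto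
    then have "way_above A c \<subseteq> q U" using U c(3) unfolding neighbourhood_pairs_def by blast
    moreover have "b \<in> way_above A c" using b c(2) unfolding way_above_def by blast
    ultimately show "b \<in> q U" by blast
  qed
qed

subsection \<open>The section\<close>

text \<open>For a surjection h from a free frame onto a locally compact frame X, section_map is a
Scott-continuous right inverse of h, so preimages along it give a frame homomorphism between the
Scott topologies.\<close>

definition section_map :: "'g set \<Rightarrow> 'x set set \<Rightarrow> ('g set set \<Rightarrow> 'x set) \<Rightarrow> 'x set \<Rightarrow> 'g set set" where
  "section_map G X h a = \<Union>{b \<in> free_frame G. way_below X (h b) a}"

definition scott_section ::
  "'g set \<Rightarrow> 'x set set \<Rightarrow> ('g set set \<Rightarrow> 'x set) \<Rightarrow> 'g set set set \<Rightarrow> 'x set set" where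
  "scott_section G X h V = {a \<in> X. section_map G X h a \<in> V}"

lemma section_map_in_free_frame: "section_map G X h a \<in> free_frame G"
  unfolding section_map_def by (rule free_frame_Union) blast

lemma section_map_mono: "a \<subseteq> a' \<Longrightarrow> section_map G X h a \<subseteq> section_map G X h a'"
  unfolding section_map_def using way_below_mono_right by blast

lemma section_map_right_inverse:
  assumes lc: "locally_compact X" and h: "frame_hom (free_frame G) X h"
    and surj: "h ` free_frame G = X" and a: "a \<in> X"
  shows "h (section_map G X h a) = a"
proof -
  let ?S = "{b \<in> free_frame G. way_below X (h b) a}"
  have SG: "?S \<subseteq> free_frame G" by blast
  have "h ` ?S = {c \<in> X. way_below X c a}" using surj by blast
  moreover have "section_map G X h a = frame_join (free_frame G) ?S"
    unfolding section_map_def by (rule free_frame_join[OF SG, symmetric])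
  ultimately show ?thesis
    using frame_hom_join[OF h SG] locally_compact_join[OF lc a] by simp
qed

lemma section_map_directed_join:
  assumes X: "is_frame X" and lc: "locally_compact X" and h: "frame_hom (free_frame G) X h"
    and D: "directed_in X D"
  shows "section_map G X h (frame_join X D) \<subseteq> \<Union>(section_map G X h ` D)"
proof
  fix K assume "K \<in> section_map G X h (frame_join X D)"
  then obtain b where b: "b \<in> free_frame G" "way_below X (h b) (frame_join X D)" "K \<in> b"
    unfolding section_map_def by blast
  from way_below_directed_join[OF X lc D b(2)]
  obtain d where "d \<in> D" "way_below X (h b) d" by blast
  then show "K \<in> \<Union>(section_map G X h ` D)" using b unfolding section_map_def by blast
qed

lemma scott_section_in_scott_frame:
  assumes X: "is_frame X" and lc: "locally_compact X" and h: "frame_hom (free_frame G) X h"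
    and V: "V \<in> scott_frame (free_frame G)"
  shows "scott_section G X h V \<in> scott_frame X"
proof (rule scott_frameI)
  let ?\<sigma> = "section_map G X h"
  show "scott_section G X h V \<subseteq> X" unfolding scott_section_def by blast
  show "b \<in> scott_section G X h V" if "a \<in> scott_section G X h V" "b \<in> X" "a \<subseteq> b" for a b
  proof -
    have "?\<sigma> a \<in> V" using that(1) unfolding scott_section_def by blast
    then have "?\<sigma> b \<in> V"
      using scott_frame_upward[OF V _ section_map_mono[OF that(3)] section_map_in_free_frame] by blast
    then show ?thesis using that(2) unfolding scott_section_def by blast
  qed
  show "\<exists>d\<in>D. d \<in> scott_section G X h V"
    if D: "directed_in X D" and j: "frame_join X D \<in> scott_section G X h V" for D
  proof -
    have DX: "D \<subseteq> X" and "D \<noteq> {}" and Ddir: "\<forall>x\<in>D. \<forall>y\<in>D. \<exists>z\<in>D. x \<subseteq> z \<and> y \<subseteq> z"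
      using D unfolding directed_in_def by auto
    have \<sigma>D: "?\<sigma> ` D \<subseteq> free_frame G" using section_map_in_free_frame by blast
    have dir: "directed_in (free_frame G) (?\<sigma> ` D)"
      unfolding directed_in_def
    proof (intro conjI ballI)
      show "?\<sigma> ` D \<subseteq> free_frame G" "?\<sigma> ` D \<noteq> {}" using \<sigma>D \<open>D \<noteq> {}\<close> by auto
    next
      fix x y assume "x \<in> ?\<sigma> ` D" "y \<in> ?\<sigma> ` D"
      then obtain dx dy where d: "dx \<in> D" "dy \<in> D" "x = ?\<sigma> dx" "y = ?\<sigma> dy" by blast
      obtain z where z: "z \<in> D" "dx \<subseteq> z" "dy \<subseteq> z" using Ddir d(1,2) by blast
      have "x \<subseteq> ?\<sigma> z" "y \<subseteq> ?\<sigma> z" using d(3,4) section_map_mono[OF z(2)] section_map_mono[OF z(3)] by simp_all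
      with z(1) show "\<exists>z\<in>?\<sigma> ` D. x \<subseteq> z \<and> y \<subseteq> z" by blast
    qed
    have "?\<sigma> (frame_join X D) \<in> V" using j unfolding scott_section_def by blast
    then have "\<Union>(?\<sigma> ` D) \<in> V"
      using scott_frame_upward[OF V _ section_map_directed_join[OF X lc h D] free_frame_Union[OF \<sigma>D]]
      by blast
    then have "frame_join (free_frame G) (?\<sigma> ` D) \<in> V" using free_frame_join[OF \<sigma>D] by simp
    with scott_frame_directed[OF V dir] obtain d where "d \<in> D" "?\<sigma> d \<in> V" by blast
    then show ?thesis using DX unfolding scott_section_def by blast
  qed
qed

lemma frame_hom_scott_section:
  assumes X: "is_frame X" and lc: "locally_compact X" and h: "frame_hom (free_frame G) X h"
  shows "frame_hom (scott_frame (free_frame G)) (scott_frame X) (scott_section G X h)"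
proof (rule frame_homI)
  show "scott_section G X h V \<in> scott_frame X" if "V \<in> scott_frame (free_frame G)" for V
    using scott_section_in_scott_frame[OF X lc h that] .
  show "scott_section G X h (\<Union>(scott_frame (free_frame G))) = \<Union>(scott_frame X)"
    unfolding Union_scott_frame scott_section_def using section_map_in_free_frame by blast
  show "scott_section G X h (V \<inter> V') = scott_section G X h V \<inter> scott_section G X h V'" for V V'
    unfolding scott_section_def by blast
  show "scott_section G X h (frame_join (scott_frame (free_frame G)) S)
      = frame_join (scott_frame X) (scott_section G X h ` S)"
    if S: "S \<subseteq> scott_frame (free_frame G)" for S
  proof -
    have S': "scott_section G X h ` S \<subseteq> scott_frame X"
      using scott_section_in_scott_frame[OF X lc h] S by blast
    show ?thesis
      unfolding scott_frame_join[OF S] scott_frame_join[OF S'] scott_section_def by blast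
  qed
qed

lemma scott_section_preimage:
  assumes lc: "locally_compact X" and h: "frame_hom (free_frame G) X h"
    and surj: "h ` free_frame G = X" and U: "U \<subseteq> X"
  shows "scott_section G X h {b \<in> free_frame G. h b \<in> U} = U"
  using U section_map_right_inverse[OF lc h surj] section_map_in_free_frame
  unfolding scott_section_def by auto

lemma preimage_pairs_in_tensor:
  assumes Y: "is_frame Y"
    and s: "frame_hom (scott_frame A) (scott_frame X) s"
    and E: "E \<in> tensor (scott_frame X) Y"
  shows "{(V, y). V \<in> scott_frame A \<and> y \<in> Y \<and> (s V, y) \<in> E} \<in> tensor (scott_frame A) Y"
    (is "?K \<in> _")
  unfolding mem_tensor_iff
proof (rule C_idealI)
  have EC: "C_ideal (scott_frame X) Y E" using E mem_tensor_iff by blast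
  show "?K \<subseteq> scott_frame A \<times> Y" by blast
  show "(V', y') \<in> ?K" if "(V, y) \<in> ?K" "V' \<in> scott_frame A" "y' \<in> Y" "V' \<subseteq> V" "y' \<subseteq> y"
    for V y V' y'
  proof -
    have V: "V \<in> scott_frame A" and Vy: "(s V, y) \<in> E" using that(1) by auto
    have "s V' \<subseteq> s V" by (rule frame_hom_mono[OF s that(2) V that(4)])
    then have "(s V', y') \<in> E"
      using C_ideal_down[OF EC Vy frame_hom_closed[OF s that(2)] that(3) _ that(5)] by blast
    then show ?thesis using that(2,3) by blast
  qed
  show "(frame_join (scott_frame A) S, y) \<in> ?K"
    if S: "S \<subseteq> scott_frame A" and y: "y \<in> Y" and H: "\<forall>V\<in>S. (V, y) \<in> ?K" for S y
  proof -
    have "s ` S \<subseteq> scott_frame X" using frame_hom_closed[OF s] S by blast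
    moreover have "\<forall>U\<in>s ` S. (U, y) \<in> E" using H by blast
    ultimately have "(s (frame_join (scott_frame A) S), y) \<in> E"
      using C_ideal_join_left[OF EC _ y] frame_hom_join[OF s S] by simp
    then show ?thesis using y scott_frame_join_closed[OF S] by blast
  qed
  show "(V, frame_join Y S) \<in> ?K"
    if S: "S \<subseteq> Y" and V: "V \<in> scott_frame A" and H: "\<forall>y\<in>S. (V, y) \<in> ?K" for S V
  proof -
    have "\<forall>y\<in>S. (s V, y) \<in> E" using H by blast
    then have "(s V, frame_join Y S) \<in> E"
      by (rule C_ideal_join_right[OF EC S frame_hom_closed[OF s V]])
    then show ?thesis using V frame_join_closed[OF Y S] by blast
  qed
qed

lemma prod_hom_retraction:
  assumes Y: "is_frame Y"
    and s: "frame_hom (scott_frame A) (scott_frame X) s"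
    and q: "\<forall>U\<in>scott_frame X. q U \<in> scott_frame A \<and> s (q U) = U"
    and E: "E \<in> tensor (scott_frame X) Y"
  shows "prod_hom (scott_frame X) Y s id (prod_hom (scott_frame A) Y q id E) = E"
proof
  have ES: "E \<subseteq> scott_frame X \<times> Y" using C_ideal_subset E mem_tensor_iff by blast
  show "E \<subseteq> prod_hom (scott_frame X) Y s id (prod_hom (scott_frame A) Y q id E)"
  proof clarify
    fix U y assume Uy: "(U, y) \<in> E"
    then have "(s (q U), id (id y)) \<in> prod_hom (scott_frame X) Y s id (prod_hom (scott_frame A) Y q id E)"
      by (intro pair_in_prod_hom)
    then show "(U, y) \<in> prod_hom (scott_frame X) Y s id (prod_hom (scott_frame A) Y q id E)"
      using q ES Uy by auto
  qed
  let ?K = "{(V, y). V \<in> scott_frame A \<and> y \<in> Y \<and> (s V, y) \<in> E}"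
  have qK: "prod_hom (scott_frame A) Y q id E \<subseteq> ?K"
    by (rule prod_hom_subset[OF preimage_pairs_in_tensor[OF Y s E]]) (use q ES in auto)
  show "prod_hom (scott_frame X) Y s id (prod_hom (scott_frame A) Y q id E) \<subseteq> E"
  proof (rule prod_hom_subset[OF E], clarify)
    fix V y assume "(V, y) \<in> prod_hom (scott_frame A) Y q id E"
    with qK show "(s V, id y) \<in> E" by auto
  qed
qed

theorem proposition3p2:
  fixes G :: "'g set"
    and R :: "('g set set \<times> 'g set set) set"
    and OX :: "'x set set"
    and iX :: "'g set set \<Rightarrow> 'x set"
    and q :: "'x set set \<Rightarrow> 'g set set set"
  assumes pres: "presents G R OX iX"
    and lc: "locally_compact OX"
    and q_hom: "frame_hom (scott_frame OX) (scott_frame (free_frame G)) q"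
    and q_ev: "\<forall>W\<in>Sierpinski_frame.
        prod_hom (scott_frame (free_frame G)) OX q id (ev_hom OX W)
      = prod_hom (scott_frame (free_frame G)) OX id iX (ev_hom (free_frame G) W)"
  shows "\<exists>s. frame_hom (scott_frame (free_frame G)) (scott_frame OX) s
     \<and> (\<forall>U\<in>scott_frame OX. s (q U) = U)
     \<and> (\<forall>W\<in>Sierpinski_frame.
          prod_hom (scott_frame OX) OX s id
            (prod_hom (scott_frame (free_frame G)) OX id iX (ev_hom (free_frame G) W))
        = ev_hom OX W)"
proof -
  have X: "is_frame OX" and iX: "frame_hom (free_frame G) OX iX" and surj: "iX ` free_frame G = OX"
    using pres unfolding presents_def by blast+
  have q_eq: "q U = {b \<in> free_frame G. iX b \<in> U}" if "U \<in> scott_frame OX" for U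
    using exponential_map_eq_preimage[OF is_frame_free_frame locally_compact_free_frame X lc iX q_hom _ that]
      q_ev generator_in_Sierpinski_frame by blast
  define s where "s = scott_section G OX iX"
  have retract: "\<forall>U\<in>scott_frame OX. q U \<in> scott_frame (free_frame G) \<and> s (q U) = U"
    using frame_hom_closed[OF q_hom] q_eq scott_section_preimage[OF lc iX surj] scott_frame_subset
    unfolding s_def by metis
  have s_hom: "frame_hom (scott_frame (free_frame G)) (scott_frame OX) s"
    unfolding s_def by (rule frame_hom_scott_section[OF X lc iX])
  show ?thesis
  proof (intro exI[of _ s] conjI ballI)
    show "frame_hom (scott_frame (free_frame G)) (scott_frame OX) s" by (rule s_hom)
    show "s (q U) = U" if "U \<in> scott_frame OX" for U
      using retract that by blast
    show "prod_hom (scott_frame OX) OX s id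
        (prod_hom (scott_frame (free_frame G)) OX id iX (ev_hom (free_frame G) W)) = ev_hom OX W"
      if "W \<in> Sierpinski_frame" for W
    proof -
      have "prod_hom (scott_frame (free_frame G)) OX id iX (ev_hom (free_frame G) W)
          = prod_hom (scott_frame (free_frame G)) OX q id (ev_hom OX W)"
        using q_ev that by simp
      then show ?thesis
        using prod_hom_retraction[OF X s_hom retract ev_hom_in_tensor[OF X]] by simp
    qed
  qed
qed

end
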